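(* Let $r\ge3$ be an integer and let $G$ be an $(r+1)$-path degenerate graph with maximum degree $\Delta\ge3$. If $G$ is a forest, then $a'_r(G)=\Delta$; otherwise $a'_r(G)=\max\{\Delta,r\}$.
   Context: Graphs are finite and simple. For an integer $r\ge3$, the generalized $r$-acyclic chromatic index $a'_r(G)$ is the minimum number of colors in a proper edge coloring of $G$ (adjacent edges get distinct colors) such that every cycle $C$ of $G$ receives at least $\min\{|C|,r\}$ distinct colors. A strict ear of a graph $G$ is a path of $G$ whose internal vertices all have degree $2$ in $G$ and whose two endpoints are distinct. For an integer $p\ge1$, a $p$-reduction of $G$ is the deletion of either an isolated vertex, or a vertex of degree $1$, or the internal vertices of a strict ear of $G$ of length at least $p$. A graph is $p$-path degenerate if it can be reduced to the empty graph by a sequence of $p$-reductions. *)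

theory Defs
  imports Main
begin

definition simple_graph :: "'a set \<Rightarrow> 'a set set \<Rightarrow> bool" where
  "simple_graph V E \<longleftrightarrow> finite V \<and>
     (\<forall>e\<in>E. \<exists>u v. e = {u, v} \<and> u \<noteq> v \<and> u \<in> V \<and> v \<in> V)"

definition degree :: "'a set set \<Rightarrow> 'a \<Rightarrow> nat" where
  "degree E v = card {e \<in> E. v \<in> e}"

definition max_degree :: "'a set \<Rightarrow> 'a set set \<Rightarrow> nat" where
  "max_degree V E = Max (insert 0 (degree E ` V))"

text \<open>A cycle given by its cyclic sequence of distinct vertices (length = number of vertices = number of edges).\<close>
definition is_cycle :: "'a set set \<Rightarrow> 'a list \<Rightarrow> bool" where
  "is_cycle E vs \<longleftrightarrow> length vs \<ge> 3 \<and> distinct vs \<and>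
     (\<forall>i < length vs. {vs ! i, vs ! ((i + 1) mod length vs)} \<in> E)"

definition cycle_edges :: "'a list \<Rightarrow> 'a set set" where
  "cycle_edges vs = {{vs ! i, vs ! ((i + 1) mod length vs)} | i. i < length vs}"

definition forest :: "'a set \<Rightarrow> 'a set set \<Rightarrow> bool" where
  "forest V E \<longleftrightarrow> \<not> (\<exists>vs. is_cycle E vs)"

definition proper_edge_coloring :: "'a set set \<Rightarrow> ('a set \<Rightarrow> nat) \<Rightarrow> bool" where
  "proper_edge_coloring E c \<longleftrightarrow>
     (\<forall>e\<in>E. \<forall>f\<in>E. e \<noteq> f \<and> e \<inter> f \<noteq> {} \<longrightarrow> c e \<noteq> c f)"

definition r_acyclic_edge_coloring :: "nat \<Rightarrow> 'a set set \<Rightarrow> nat \<Rightarrow> ('a set \<Rightarrow> nat) \<Rightarrow> bool" where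
  "r_acyclic_edge_coloring r E k c \<longleftrightarrow>
     c ` E \<subseteq> {0..<k} \<and> proper_edge_coloring E c \<and>
     (\<forall>vs. is_cycle E vs \<longrightarrow> card (c ` cycle_edges vs) \<ge> min (length vs) r)"

definition gen_acyclic_chromatic_index :: "nat \<Rightarrow> 'a set \<Rightarrow> 'a set set \<Rightarrow> nat" where
  "gen_acyclic_chromatic_index r V E = (LEAST k. \<exists>c. r_acyclic_edge_coloring r E k c)"

definition strict_ear :: "'a set set \<Rightarrow> 'a list \<Rightarrow> bool" where
  "strict_ear E xs \<longleftrightarrow> length xs \<ge> 2 \<and> distinct xs \<and>
     (\<forall>i. Suc i < length xs \<longrightarrow> {xs ! i, xs ! Suc i} \<in> E) \<and>
     (\<forall>i. 0 < i \<and> Suc i < length xs \<longrightarrow> degree E (xs ! i) = 2)"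

definition ear_interior :: "'a list \<Rightarrow> 'a set" where
  "ear_interior xs = set (butlast (tl xs))"

definition delete_vertices :: "'a set \<Rightarrow> 'a set \<Rightarrow> 'a set set \<Rightarrow> 'a set \<times> 'a set set" where
  "delete_vertices S V E = (V - S, {e \<in> E. e \<inter> S = {}})"

inductive p_reduction :: "nat \<Rightarrow> 'a set \<Rightarrow> 'a set set \<Rightarrow> 'a set \<Rightarrow> 'a set set \<Rightarrow> bool"
  for p :: nat where
  isolated: "v \<in> V \<Longrightarrow> degree E v = 0 \<Longrightarrow> (V', E') = delete_vertices {v} V E
     \<Longrightarrow> p_reduction p V E V' E'"
| leaf: "v \<in> V \<Longrightarrow> degree E v = 1 \<Longrightarrow> (V', E') = delete_vertices {v} V E
     \<Longrightarrow> p_reduction p V E V' E'"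
| ear: "strict_ear E xs \<Longrightarrow> set xs \<subseteq> V \<Longrightarrow> length xs - 1 \<ge> p
     \<Longrightarrow> (V', E') = delete_vertices (ear_interior xs) V E
     \<Longrightarrow> p_reduction p V E V' E'"

inductive path_degenerate :: "nat \<Rightarrow> 'a set \<Rightarrow> 'a set set \<Rightarrow> bool" for p :: nat where
  empty: "path_degenerate p {} {}"
| step: "p_reduction p V E V' E' \<Longrightarrow> path_degenerate p V' E' \<Longrightarrow> path_degenerate p V E"

end

theory Submission
  imports Defs
begin

text \<open>
  A reduction step deletes only vertices lying on no cycle of length at most \<open>p\<close>: vertices of
  degree below 2 lie on no cycle at all, and a cycle through an interior vertex of a strict ear
  must traverse the whole ear. Hence every cycle of an \<open>(r + 1)\<close>-path degenerate graph has
  more than \<open>r + 1\<close> vertices, so \<open>max \<Delta> r\<close> colors are necessary when there is a cycle, and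
  \<open>\<Delta>\<close> always are. For sufficiency, undo the reductions one by one, with any \<open>k \<ge> max \<Delta> 3\<close> colors
  available. A leaf edge gets a color missing at its other end. The \<open>L \<ge> r + 1\<close> edges of an ear
  are colored along the ear by a word with distinct neighbours, end letters missing at the ends
  of the ear, and \<open>min r k\<close> distinct letters; every new cycle contains the whole ear, hence sees
  all of them.
\<close>

lemma simple_graph_edgeE:
  assumes "simple_graph V E" "e \<in> E"
  obtains u v where "e = {u, v}" "u \<noteq> v" "u \<in> V" "v \<in> V"
  using assms unfolding simple_graph_def by blast

lemma simple_graph_finite_edges:
  assumes "simple_graph V E"
  shows "finite E"
proof -
  have "E \<subseteq> Pow V"
  proof
    fix e assume "e \<in> E"
    with assms show "e \<in> Pow V" by (auto elim: simple_graph_edgeE)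
  qed
  then show ?thesis using assms unfolding simple_graph_def by (meson finite_Pow_iff finite_subset)
qed

lemma simple_graph_delete_vertices:
  assumes "simple_graph V E" "(V', E') = delete_vertices S V E"
  shows "simple_graph V' E'"
proof -
  have "V' = V - S" "E' = {e \<in> E. e \<inter> S = {}}"
    using assms(2) unfolding delete_vertices_def by simp_all
  show ?thesis unfolding simple_graph_def
  proof (intro conjI ballI)
    show "finite V'" using assms(1) \<open>V' = V - S\<close> unfolding simple_graph_def by simp
    fix e assume "e \<in> E'"
    then have "e \<in> E" "e \<inter> S = {}" using \<open>E' = _\<close> by simp_all
    then obtain u v where "e = {u, v}" "u \<noteq> v" "u \<in> V" "v \<in> V"
      using assms(1) by (auto elim: simple_graph_edgeE)
    then show "\<exists>u v. e = {u, v} \<and> u \<noteq> v \<and> u \<in> V' \<and> v \<in> V'"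
      using \<open>e \<inter> S = {}\<close> \<open>V' = V - S\<close> by blast
  qed
qed

lemma degree_mono: "finite E \<Longrightarrow> E' \<subseteq> E \<Longrightarrow> degree E' v \<le> degree E v"
  unfolding degree_def by (rule card_mono) auto

lemma degree_pos: "finite E \<Longrightarrow> e \<in> E \<Longrightarrow> v \<in> e \<Longrightarrow> 0 < degree E v"
  unfolding degree_def by (auto simp: card_gt_0_iff)

lemma degree_le_max_degree: "finite V \<Longrightarrow> v \<in> V \<Longrightarrow> degree E v \<le> max_degree V E"
  unfolding max_degree_def by simp

lemma finite_cycle_edges: "finite (cycle_edges vs)"
  unfolding cycle_edges_def by simp

lemma cycle_edges_subset: "is_cycle E vs \<Longrightarrow> cycle_edges vs \<subseteq> E"
  unfolding is_cycle_def cycle_edges_def by auto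

lemma cycle_edge_subset_vertices: "e \<in> cycle_edges vs \<Longrightarrow> e \<subseteq> set vs"
proof -
  assume "e \<in> cycle_edges vs"
  then obtain i where "i < length vs" "e = {vs ! i, vs ! ((i + 1) mod length vs)}"
    unfolding cycle_edges_def by blast
  moreover from this have "(i + 1) mod length vs < length vs"
    by (metis mod_less_divisor gr_implies_not0 neq0_conv)
  ultimately show ?thesis by (simp add: nth_mem)
qed

lemma is_cycle_restrict:
  assumes "is_cycle E vs" "cycle_edges vs \<subseteq> E'"
  shows "is_cycle E' vs"
proof -
  have "{vs ! i, vs ! ((i + 1) mod length vs)} \<in> E'" if "i < length vs" for i
    using assms(2) that unfolding cycle_edges_def by blast
  then show ?thesis using assms(1) unfolding is_cycle_def by simp
qed

lemma is_cycle_delete_vertices: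
  assumes "is_cycle E vs" "set vs \<inter> S = {}"
  shows "is_cycle {e \<in> E. e \<inter> S = {}} vs"
proof (rule is_cycle_restrict[OF assms(1)])
  show "cycle_edges vs \<subseteq> {e \<in> E. e \<inter> S = {}}"
    using assms cycle_edges_subset[OF assms(1)] cycle_edge_subset_vertices by blast
qed

lemma not_is_cycle_empty: "\<not> is_cycle {} vs"
  unfolding is_cycle_def by (metis empty_iff gr0I not_numeral_le_zero)

lemma cycle_neighboursE:
  assumes "is_cycle E vs" "w \<in> set vs"
  obtains a b where "a \<noteq> b" "{w, a} \<in> cycle_edges vs" "{w, b} \<in> cycle_edges vs" "w \<noteq> a" "w \<noteq> b"
proof -
  let ?n = "length vs"
  have n: "3 \<le> ?n" and dist: "distinct vs" using assms(1) unfolding is_cycle_def by auto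
  obtain j where j: "j < ?n" "vs ! j = w" using assms(2) by (metis in_set_conv_nth)
  define succ where "succ = (if j = ?n - 1 then 0 else j + 1)"
  define pred where "pred = (if j = 0 then ?n - 1 else j - 1)"
  have succ: "succ < ?n" "succ = (j + 1) mod ?n"
    using j n unfolding succ_def by (auto simp: Suc_lessI mod_Suc)
  have pred: "pred < ?n" "(pred + 1) mod ?n = j"
    using j n unfolding pred_def by auto
  have "succ \<noteq> pred" "j \<noteq> succ" "j \<noteq> pred"
    using j n unfolding succ_def pred_def by auto
  then have neq: "vs ! succ \<noteq> vs ! pred" "w \<noteq> vs ! succ" "w \<noteq> vs ! pred"
    using dist j succ pred by (auto simp: nth_eq_iff_index_eq)
  have e_succ: "{w, vs ! succ} \<in> cycle_edges vs"
    unfolding cycle_edges_def using j succ by auto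
  have "{vs ! pred, w} \<in> cycle_edges vs"
    unfolding cycle_edges_def using j pred by force
  then have e_pred: "{w, vs ! pred} \<in> cycle_edges vs"
    by (simp only: insert_commute)
  show ?thesis
    by (rule that[OF neq(1) e_succ e_pred neq(2,3)])
qed

lemma two_le_degree_of_cycle_vertex:
  assumes "finite E" "is_cycle E vs" "w \<in> set vs"
  shows "2 \<le> degree E w"
proof -
  obtain a b where ab: "a \<noteq> b" "{w, a} \<in> cycle_edges vs" "{w, b} \<in> cycle_edges vs"
    using cycle_neighboursE[OF assms(2,3)] by blast
  have "{{w, a}, {w, b}} \<subseteq> {e \<in> E. w \<in> e}" using ab cycle_edges_subset[OF assms(2)] by auto
  moreover have "card {{w, a}, {w, b}} = 2" using ab(1) by (simp add: doubleton_eq_iff)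
  moreover have "finite {e \<in> E. w \<in> e}" using assms(1) by simp
  ultimately show ?thesis unfolding degree_def by (metis card_mono)
qed

definition ear_edge :: "'a list \<Rightarrow> nat \<Rightarrow> 'a set" where
  "ear_edge xs j = {xs ! j, xs ! Suc j}"

lemma strict_ear_edge: "strict_ear E xs \<Longrightarrow> Suc j < length xs \<Longrightarrow> ear_edge xs j \<in> E"
  unfolding strict_ear_def ear_edge_def by blast

lemma ear_interior_iff: "x \<in> ear_interior xs \<longleftrightarrow> (\<exists>i. 0 < i \<and> Suc i < length xs \<and> x = xs ! i)"
proof
  assume "x \<in> ear_interior xs"
  then obtain j where j: "j < length (butlast (tl xs))" "x = butlast (tl xs) ! j"
    unfolding ear_interior_def by (metis in_set_conv_nth)
  then have "Suc (Suc j) < length xs" "x = xs ! Suc j"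
    by (simp_all add: nth_butlast nth_tl)
  then show "\<exists>i. 0 < i \<and> Suc i < length xs \<and> x = xs ! i" by blast
next
  assume "\<exists>i. 0 < i \<and> Suc i < length xs \<and> x = xs ! i"
  then obtain j where j: "Suc (Suc j) < length xs" "x = xs ! Suc j"
    by (metis Suc_pred)
  then have "j < length (butlast (tl xs))" "butlast (tl xs) ! j = x"
    by (simp_all add: nth_butlast nth_tl)
  then show "x \<in> ear_interior xs" unfolding ear_interior_def by (metis nth_mem)
qed

lemma ear_edge_inj_on:
  assumes "distinct xs"
  shows "inj_on (ear_edge xs) {..<length xs - 1}"
proof (rule inj_onI)
  fix i j assume ij: "i \<in> {..<length xs - 1}" "j \<in> {..<length xs - 1}" "ear_edge xs i = ear_edge xs j"
  then have "xs ! i \<in> {xs ! j, xs ! Suc j}" "xs ! Suc i \<in> {xs ! j, xs ! Suc j}"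
    unfolding ear_edge_def by auto
  then show "i = j" using ij(1,2) assms by (auto simp: nth_eq_iff_index_eq)
qed

lemma ear_edges_meet:
  assumes "distinct xs" "Suc i < length xs" "Suc j < length xs"
    and "ear_edge xs i \<inter> ear_edge xs j \<noteq> {}"
  shows "i = j \<or> Suc i = j \<or> Suc j = i"
proof -
  have "xs ! i = xs ! j \<or> xs ! i = xs ! Suc j \<or> xs ! Suc i = xs ! j \<or> xs ! Suc i = xs ! Suc j"
    using assms(4) unfolding ear_edge_def by auto
  then show ?thesis using assms(1-3) by (auto simp: nth_eq_iff_index_eq)
qed

lemma strict_ear_incident_edges:
  assumes "finite E" "strict_ear E xs" "0 < i" "Suc i < length xs"
  shows "{e \<in> E. xs ! i \<in> e} = {ear_edge xs (i - 1), ear_edge xs i}"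
proof -
  have dist: "distinct xs" and "degree E (xs ! i) = 2"
    using assms(2-4) unfolding strict_ear_def by auto
  then have card: "card {e \<in> E. xs ! i \<in> e} = 2" unfolding degree_def by simp
  have "xs ! (i - 1) \<notin> ear_edge xs i"
    using dist assms(3,4) unfolding ear_edge_def by (auto simp: nth_eq_iff_index_eq)
  then have "ear_edge xs (i - 1) \<noteq> ear_edge xs i"
    unfolding ear_edge_def by auto
  then have "card {ear_edge xs (i - 1), ear_edge xs i} = 2" by simp
  moreover have "{ear_edge xs (i - 1), ear_edge xs i} \<subseteq> {e \<in> E. xs ! i \<in> e}"
    using strict_ear_edge[OF assms(2), of "i - 1"] strict_ear_edge[OF assms(2), of i] assms(3,4)
    unfolding ear_edge_def by auto
  moreover have "finite {e \<in> E. xs ! i \<in> e}" using assms(1) by simp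
  ultimately show ?thesis using card by (metis card_subset_eq)
qed

lemma strict_ear_cycle_edges:
  assumes "finite E" "strict_ear E xs" "is_cycle E vs" "0 < i" "Suc i < length xs"
    and "xs ! i \<in> set vs"
  shows "ear_edge xs (i - 1) \<in> cycle_edges vs" "ear_edge xs i \<in> cycle_edges vs"
proof -
  let ?w = "xs ! i"
  let ?N = "{e \<in> E. ?w \<in> e}"
  obtain a b where ab: "a \<noteq> b" "{?w, a} \<in> cycle_edges vs" "{?w, b} \<in> cycle_edges vs"
    using cycle_neighboursE[OF assms(3,6)] by blast
  have N: "?N = {ear_edge xs (i - 1), ear_edge xs i}"
    by (rule strict_ear_incident_edges[OF assms(1,2,4,5)])
  have sub: "{{?w, a}, {?w, b}} \<subseteq> ?N" using ab cycle_edges_subset[OF assms(3)] by auto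
  have "card ?N = 2"
    using assms(2,4,5) unfolding strict_ear_def degree_def by blast
  moreover have "card {{?w, a}, {?w, b}} = 2"
    using ab(1) by (simp add: doubleton_eq_iff)
  moreover have "finite ?N" using assms(1) by simp
  ultimately have "{{?w, a}, {?w, b}} = {ear_edge xs (i - 1), ear_edge xs i}"
    using card_subset_eq[OF _ sub] N by simp
  then have "ear_edge xs (i - 1) \<in> {{?w, a}, {?w, b}}" "ear_edge xs i \<in> {{?w, a}, {?w, b}}"
    by simp_all
  then show "ear_edge xs (i - 1) \<in> cycle_edges vs" "ear_edge xs i \<in> cycle_edges vs"
    using ab(2,3) by auto
qed

lemma nat_segment_propagate:
  fixes P :: "nat \<Rightarrow> bool"
  assumes "P i" "0 < i" "Suc i < n"
    and step: "\<And>j. 0 < j \<Longrightarrow> Suc j < n \<Longrightarrow> P j \<Longrightarrow> P (j - 1) \<and> P (Suc j)"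
    and "j < n"
  shows "P j"
proof -
  have up: "P (i + d)" if "i + d < n" for d
    using that
  proof (induction d)
    case (Suc d)
    then show ?case using step[of "i + d"] assms(2) by simp
  qed (simp add: assms(1))
  have down: "P (i - d)" if "d \<le> i" for d
    using that
  proof (induction d)
    case (Suc d)
    then have "0 < i - d" "Suc (i - d) < n" "P (i - d)" using assms(3) by auto
    from step[OF this] have "P (i - d - 1)" by (rule conjunct1)
    then show ?case by simp
  qed (simp add: assms(1))
  show ?thesis
  proof (cases "i \<le> j")
    case True
    then show ?thesis using up[of "j - i"] assms(5) by simp
  next
    case False
    then show ?thesis using down[of "i - j"] by simp
  qed
qed

lemma strict_ear_on_cycle:
  assumes "finite E" "strict_ear E xs" "is_cycle E vs"
    and "x \<in> ear_interior xs" "x \<in> set vs"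
  shows "ear_edge xs ` {..<length xs - 1} \<subseteq> cycle_edges vs" "set xs \<subseteq> set vs"
proof -
  let ?n = "length xs"
  obtain i where i: "0 < i" "Suc i < ?n" "xs ! i \<in> set vs"
    using assms(4,5) ear_interior_iff by metis
  note edges = strict_ear_cycle_edges[OF assms(1-3)]
  have on_cycle: "xs ! j \<in> set vs" if "j < ?n" for j
  proof (rule nat_segment_propagate[where P = "\<lambda>j. xs ! j \<in> set vs", OF i(3,1,2) _ that])
    fix j assume j: "0 < j" "Suc j < ?n" "xs ! j \<in> set vs"
    then have "ear_edge xs (j - 1) \<subseteq> set vs" "ear_edge xs j \<subseteq> set vs"
      using edges[OF j] cycle_edge_subset_vertices by blast+
    then show "xs ! (j - 1) \<in> set vs \<and> xs ! Suc j \<in> set vs"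
      unfolding ear_edge_def by simp
  qed
  show "set xs \<subseteq> set vs"
    using on_cycle by (auto simp: in_set_conv_nth)
  show "ear_edge xs ` {..<?n - 1} \<subseteq> cycle_edges vs"
  proof
    fix e assume "e \<in> ear_edge xs ` {..<?n - 1}"
    then obtain j where "j < ?n - 1" "e = ear_edge xs j" by blast
    then have j: "Suc j < ?n" "e = ear_edge xs j" by simp_all
    show "e \<in> cycle_edges vs"
    proof (cases j)
      case 0
      then show ?thesis using edges(1)[of 1] on_cycle[of 1] i j by simp
    next
      case (Suc j')
      then show ?thesis using edges(2)[of j] on_cycle[of j] j by simp
    qed
  qed
qed

lemma strict_ear_removed_edges:
  assumes "finite E" "strict_ear E xs" "3 \<le> length xs"
  shows "{e \<in> E. e \<inter> ear_interior xs \<noteq> {}} = ear_edge xs ` {..<length xs - 1}"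
proof (intro equalityI subsetI)
  fix e assume "e \<in> {e \<in> E. e \<inter> ear_interior xs \<noteq> {}}"
  then obtain x where "e \<in> E" "x \<in> e" "x \<in> ear_interior xs" by blast
  then obtain i where e: "e \<in> E" "xs ! i \<in> e" and i: "0 < i" "Suc i < length xs"
    unfolding ear_interior_iff by blast
  then have "e = ear_edge xs (i - 1) \<or> e = ear_edge xs i"
    using strict_ear_incident_edges[OF assms(1,2) i] by blast
  then show "e \<in> ear_edge xs ` {..<length xs - 1}" using i by auto
next
  fix e assume "e \<in> ear_edge xs ` {..<length xs - 1}"
  then obtain j where "j < length xs - 1" "e = ear_edge xs j" by blast
  then have j: "Suc j < length xs" "e = ear_edge xs j" by simp_all
  define i where "i = (if j = 0 then 1 else j)"
  have "0 < i" "Suc i < length xs" "xs ! i \<in> e"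
    using j assms(3) unfolding i_def ear_edge_def by auto
  then have "xs ! i \<in> ear_interior xs" unfolding ear_interior_iff by blast
  then have "e \<inter> ear_interior xs \<noteq> {}" using \<open>xs ! i \<in> e\<close> by blast
  then show "e \<in> {e \<in> E. e \<inter> ear_interior xs \<noteq> {}}"
    using strict_ear_edge[OF assms(2) j(1)] j(2) by blast
qed

lemma strict_ear_edge_meets_outside:
  assumes "Suc j < length xs" "f \<inter> ear_interior xs = {}" "ear_edge xs j \<inter> f \<noteq> {}"
  shows "(j = 0 \<and> hd xs \<in> f) \<or> (Suc j = length xs - 1 \<and> last xs \<in> f)"
proof -
  have interior: "xs ! i \<notin> f" if "0 < i" "Suc i < length xs" for i
  proof -
    have "xs ! i \<in> ear_interior xs" unfolding ear_interior_iff using that by blast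
    then show ?thesis using assms(2) by blast
  qed
  have "xs ! j \<in> f \<or> xs ! Suc j \<in> f" using assms(3) unfolding ear_edge_def by blast
  then show ?thesis
  proof
    assume "xs ! j \<in> f"
    then have "j = 0" using interior[of j] assms(1) by auto
    moreover have "xs \<noteq> []" using assms(1) by auto
    ultimately show ?thesis using \<open>xs ! j \<in> f\<close> by (simp add: hd_conv_nth)
  next
    assume "xs ! Suc j \<in> f"
    then have "Suc j = length xs - 1" using interior[of "Suc j"] assms(1) by fastforce
    moreover have "xs \<noteq> []" using assms(1) by auto
    ultimately show ?thesis using \<open>xs ! Suc j \<in> f\<close> by (simp add: last_conv_nth)
  qed
qed

lemma strict_ear_cycle_leaving_remainder:
  assumes "finite E" "strict_ear E xs" "is_cycle E vs"
    and "\<not> cycle_edges vs \<subseteq> {e \<in> E. e \<inter> ear_interior xs = {}}"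
  shows "ear_edge xs ` {..<length xs - 1} \<subseteq> cycle_edges vs"
proof -
  obtain e where e: "e \<in> cycle_edges vs" "e \<notin> {e \<in> E. e \<inter> ear_interior xs = {}}"
    using assms(4) by blast
  have "e \<in> E" using subsetD[OF cycle_edges_subset[OF assms(3)] e(1)] .
  then have "e \<inter> ear_interior xs \<noteq> {}" using e(2) by simp
  then obtain x where "x \<in> e" "x \<in> ear_interior xs" by blast
  moreover have "x \<in> set vs" using cycle_edge_subset_vertices[OF e(1)] \<open>x \<in> e\<close> by blast
  ultimately show ?thesis using strict_ear_on_cycle(1)[OF assms(1-3)] by simp
qed

lemma p_reduction_meets_only_long_cycles:
  assumes "p_reduction p V E V' E'" "simple_graph V E"
  obtains S where "(V', E') = delete_vertices S V E"
    and "\<And>vs. is_cycle E vs \<Longrightarrow> set vs \<inter> S \<noteq> {} \<Longrightarrow> p + 1 \<le> length vs"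
proof -
  have fin: "finite E" using assms(2) by (rule simple_graph_finite_edges)
  have low_degree: "p + 1 \<le> length vs"
    if "is_cycle E vs" "set vs \<inter> {v} \<noteq> {}" "degree E v < 2" for vs v
    using two_le_degree_of_cycle_vertex[OF fin that(1), of v] that(2,3) by auto
  from assms(1) show ?thesis
  proof cases
    case (isolated v)
    then show ?thesis using that[of "{v}"] low_degree by simp
  next
    case (leaf v)
    then show ?thesis using that[of "{v}"] low_degree by simp
  next
    case (ear xs)
    have "p + 1 \<le> length vs"
      if cycle: "is_cycle E vs" and meets: "set vs \<inter> ear_interior xs \<noteq> {}" for vs
    proof -
      obtain x where "x \<in> ear_interior xs" "x \<in> set vs" using meets by blast
      then have "set xs \<subseteq> set vs" using strict_ear_on_cycle[OF fin ear(1) cycle] by blast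
      then have "card (set xs) \<le> length vs" by (metis card_length card_mono List.finite_set order_trans)
      moreover have "card (set xs) = length xs" "2 \<le> length xs"
        using ear(1) unfolding strict_ear_def by (simp_all add: distinct_card)
      ultimately show ?thesis using ear(3) by linarith
    qed
    then show ?thesis using that ear(4) by blast
  qed
qed

lemma path_degenerate_cycle_length:
  assumes "path_degenerate p V E" "simple_graph V E" "is_cycle E vs"
  shows "p + 1 \<le> length vs"
  using assms
proof (induction arbitrary: vs rule: path_degenerate.induct)
  case empty
  then show ?case using not_is_cycle_empty by blast
next
  case (step V E V' E')
  obtain S where S: "(V', E') = delete_vertices S V E"
    and long: "\<And>vs. is_cycle E vs \<Longrightarrow> set vs \<inter> S \<noteq> {} \<Longrightarrow> p + 1 \<le> length vs"
    using p_reduction_meets_only_long_cycles[OF step(1,4)] by blast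
  show ?case
  proof (cases "set vs \<inter> S = {}")
    case True
    then have "is_cycle E' vs"
      using is_cycle_delete_vertices[OF step(5)] S unfolding delete_vertices_def by simp
    moreover have "simple_graph V' E'" using simple_graph_delete_vertices[OF step(4) S] .
    ultimately show ?thesis using step(3) by blast
  next
    case False
    then show ?thesis using long step(5) by blast
  qed
qed

lemma successively_neq_if_distinct: "distinct xs \<Longrightarrow> successively (\<noteq>) xs"
  by (rule successively_if_sorted_wrt) (induction xs, auto)

lemma exists_distinct_list_avoiding:
  assumes "A \<subseteq> {..<k}" "t + card A \<le> k"
  obtains ds where "length ds = t" "distinct ds" "set ds \<subseteq> {..<k} - A"
proof -
  have "card ({..<k} - A) = k - card A"
    using assms(1) by (simp add: card_Diff_subset finite_subset)
  then have "t \<le> card ({..<k} - A)" using assms(2) by simp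
  then obtain B where "B \<subseteq> {..<k} - A" "card B = t" "finite B"
    by (rule obtain_subset_with_card_n)
  then show ?thesis
    using that[of "sorted_list_of_set B"] by simp
qed

lemma exists_color_word_min_length:
  fixes \<alpha> \<beta> :: nat
  assumes "3 \<le> m" "m \<le> k" "\<alpha> < k" "\<beta> < k"
  obtains cs where "length cs = Suc m" "hd cs = \<alpha>" "last cs = \<beta>" "set cs \<subseteq> {..<k}"
    "successively (\<noteq>) cs" "card (set cs) = m"
proof (cases "\<alpha> = \<beta>")
  case True
  obtain ds where ds: "length ds = m - 1" "distinct ds" "set ds \<subseteq> {..<k} - {\<alpha>}"
    using exists_distinct_list_avoiding[of "{\<alpha>}" k "m - 1"] assms by force
  have "ds \<noteq> []" using ds(1) assms(1) by auto
  then have "hd ds \<noteq> \<alpha>" "last ds \<noteq> \<alpha>"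
    using ds(3) hd_in_set last_in_set by blast+
  then have succ: "successively (\<noteq>) (\<alpha> # ds @ [\<alpha>])"
    using successively_neq_if_distinct[OF ds(2)] \<open>ds \<noteq> []\<close>
    by (auto simp: successively_Cons successively_append_iff)
  have "\<alpha> \<notin> set ds" using ds(3) by blast
  then have "card (set (\<alpha> # ds @ [\<alpha>])) = m"
    using ds assms(1) by (simp add: distinct_card)
  moreover have "length (\<alpha> # ds @ [\<alpha>]) = Suc m" using ds(1) assms(1) by simp
  moreover have "set (\<alpha> # ds @ [\<alpha>]) \<subseteq> {..<k}" using ds(3) assms(3) by auto
  ultimately show ?thesis
    using that[OF _ _ _ _ succ] True by simp
next
  case False
  \<comment> \<open>The word \<open>\<alpha> \<beta> ds \<beta>\<close> needs only \<open>m - 2\<close> fresh letters, which exist even if \<open>k = m\<close>.\<close>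
  obtain ds where ds: "length ds = m - 2" "distinct ds" "set ds \<subseteq> {..<k} - {\<alpha>, \<beta>}"
    using exists_distinct_list_avoiding[of "{\<alpha>, \<beta>}" k "m - 2"] assms False by force
  have "ds \<noteq> []" using ds(1) assms(1) by auto
  then have "hd ds \<noteq> \<beta>" "last ds \<noteq> \<beta>"
    using ds(3) hd_in_set last_in_set by blast+
  then have succ: "successively (\<noteq>) (\<alpha> # \<beta> # ds @ [\<beta>])"
    using successively_neq_if_distinct[OF ds(2)] \<open>ds \<noteq> []\<close> False
    by (auto simp: successively_Cons successively_append_iff)
  have "\<alpha> \<notin> set ds" "\<beta> \<notin> set ds" using ds(3) by blast+
  then have "card (set (\<alpha> # \<beta> # ds @ [\<beta>])) = m"
    using ds assms(1) False by (simp add: distinct_card)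
  moreover have "length (\<alpha> # \<beta> # ds @ [\<beta>]) = Suc m" using ds(1) assms(1) by simp
  moreover have "set (\<alpha> # \<beta> # ds @ [\<beta>]) \<subseteq> {..<k}" using ds(3) assms(3,4) by auto
  ultimately show ?thesis
    using that[OF _ _ _ _ succ] by simp
qed

lemma exists_color_word:
  fixes \<alpha> \<beta> :: nat
  assumes "3 \<le> m" "m \<le> k" "m < L" "\<alpha> < k" "\<beta> < k"
  obtains cs where "length cs = L" "hd cs = \<alpha>" "last cs = \<beta>" "set cs \<subseteq> {..<k}"
    "successively (\<noteq>) cs" "m \<le> card (set cs)"
proof -
  define word where "word L \<beta> cs \<longleftrightarrow> length cs = L \<and> hd cs = \<alpha> \<and> last cs = \<beta> \<and>
    set cs \<subseteq> {..<k} \<and> successively (\<noteq>) cs \<and> m \<le> card (set cs)" for L \<beta> cs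
  have "Suc m \<le> L" using assms(3) by simp
  then have "\<forall>\<beta> < k. \<exists>cs. word L \<beta> cs"
  proof (induction L rule: dec_induct)
    case base
    show ?case
      using exists_color_word_min_length[OF assms(1,2,4)] unfolding word_def by (metis order_refl)
  next
    case (step L)
    show ?case
    proof (intro allI impI)
      fix \<beta> assume \<beta>: "\<beta> < k"
      define \<gamma> where "\<gamma> = (if \<beta> = 0 then 1 else 0 :: nat)"
      have \<gamma>: "\<gamma> < k" "\<gamma> \<noteq> \<beta>" using assms(1,2) unfolding \<gamma>_def by auto
      then obtain cs where cs: "word L \<gamma> cs" using step.IH by blast
      have "cs \<noteq> []" using cs step.hyps assms(1) unfolding word_def by auto
      then have "word (Suc L) \<beta> (cs @ [\<beta>])"
        using cs \<gamma> \<beta> card_insert_le[of "set cs" \<beta>] unfolding word_def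
        by (auto simp: successively_append_iff)
      then show "\<exists>cs. word (Suc L) \<beta> cs" ..
    qed
  qed
  then show ?thesis using that assms(5) unfolding word_def by blast
qed

text \<open>Capping the requirement at \<open>k\<close> lets a single induction serve both \<open>k = \<Delta>\<close> (possibly
  below \<open>r\<close>, for forests) and \<open>k = max \<Delta> r\<close>.\<close>

definition capped_acyclic_edge_coloring :: "nat \<Rightarrow> 'a set set \<Rightarrow> nat \<Rightarrow> ('a set \<Rightarrow> nat) \<Rightarrow> bool" where
  "capped_acyclic_edge_coloring r E k c \<longleftrightarrow>
     c ` E \<subseteq> {0..<k} \<and> proper_edge_coloring E c \<and>
     (\<forall>vs. is_cycle E vs \<longrightarrow> min r k \<le> card (c ` cycle_edges vs))"

lemma capped_acyclic_edge_coloring_empty: "capped_acyclic_edge_coloring r {} k c"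
  unfolding capped_acyclic_edge_coloring_def proper_edge_coloring_def
  using not_is_cycle_empty by blast

lemma capped_acyclic_edge_coloring_extend:
  assumes c: "capped_acyclic_edge_coloring r E' k c" and "E' \<subseteq> E"
    and agree: "\<And>e. e \<in> E' \<Longrightarrow> c' e = c e"
    and new_range: "\<And>e. e \<in> E - E' \<Longrightarrow> c' e < k"
    and new_proper: "\<And>e f. e \<in> E - E' \<Longrightarrow> f \<in> E \<Longrightarrow> e \<noteq> f \<Longrightarrow> e \<inter> f \<noteq> {} \<Longrightarrow> c' e \<noteq> c' f"
    and new_cycles: "\<And>vs. is_cycle E vs \<Longrightarrow> \<not> cycle_edges vs \<subseteq> E' \<Longrightarrow>
      min r k \<le> card (c' ` cycle_edges vs)"
  shows "capped_acyclic_edge_coloring r E k c'"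
  unfolding capped_acyclic_edge_coloring_def
proof (intro conjI allI impI)
  have "c ` E' \<subseteq> {0..<k}" using c unfolding capped_acyclic_edge_coloring_def by blast
  then show "c' ` E \<subseteq> {0..<k}" using agree new_range by fastforce
  show "proper_edge_coloring E c'"
    unfolding proper_edge_coloring_def
  proof (intro ballI impI)
    fix e f assume ef: "e \<in> E" "f \<in> E" "e \<noteq> f \<and> e \<inter> f \<noteq> {}"
    show "c' e \<noteq> c' f"
    proof (cases "e \<in> E' \<and> f \<in> E'")
      case True
      then show ?thesis using c ef agree unfolding capped_acyclic_edge_coloring_def
          proper_edge_coloring_def by metis
    next
      case False
      then show ?thesis using new_proper ef by (metis DiffI inf_commute)
    qed
  qed
  fix vs assume cycle: "is_cycle E vs"
  show "min r k \<le> card (c' ` cycle_edges vs)"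
  proof (cases "cycle_edges vs \<subseteq> E'")
    case True
    then have "c' ` cycle_edges vs = c ` cycle_edges vs" using agree by (auto simp: subset_iff)
    then show ?thesis using c is_cycle_restrict[OF cycle True]
      unfolding capped_acyclic_edge_coloring_def by simp
  next
    case False
    then show ?thesis using new_cycles cycle by blast
  qed
qed

lemma exists_color_missing_at:
  fixes c :: "'a set \<Rightarrow> nat"
  assumes "finite E" "E' \<subseteq> E" "e \<in> E - E'" "z \<in> e" "degree E z \<le> k"
  obtains \<alpha> where "\<alpha> < k" "\<alpha> \<notin> c ` {f \<in> E'. z \<in> f}"
proof -
  have fin: "finite {f \<in> E'. z \<in> f}" using finite_subset[OF assms(2,1)] by simp
  have "card (c ` {f \<in> E'. z \<in> f}) \<le> card {f \<in> E'. z \<in> f}"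
    using fin by (rule card_image_le)
  also have "\<dots> \<le> card ({f \<in> E. z \<in> f} - {e})"
    using assms(1-3) by (intro card_mono) auto
  also have "\<dots> < k"
    using assms degree_pos[OF assms(1), of e z] unfolding degree_def by simp
  finally have "card (c ` {f \<in> E'. z \<in> f}) < card {..<k}" by simp
  then have "\<not> {..<k} \<subseteq> c ` {f \<in> E'. z \<in> f}"
    using card_mono[OF finite_imageI[OF fin], of "{..<k}" c] by linarith
  then show ?thesis using that by blast
qed

lemma capped_acyclic_edge_coloring_add_leaf:
  assumes graph: "simple_graph V E" and leaf: "degree E v = 1" and deg: "\<forall>w\<in>V. degree E w \<le> k"
    and c: "capped_acyclic_edge_coloring r {e \<in> E. e \<inter> {v} = {}} k c"
  obtains c' where "capped_acyclic_edge_coloring r E k c'"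
proof -
  let ?E' = "{e \<in> E. e \<inter> {v} = {}}"
  have fin: "finite E" using graph by (rule simple_graph_finite_edges)
  obtain e0 where N: "{e \<in> E. v \<in> e} = {e0}"
    using leaf unfolding degree_def by (rule card_1_singletonE)
  then have removed: "E - ?E' = {e0}" by blast
  obtain u where e0: "e0 = {v, u}" "u \<in> V"
  proof -
    have "e0 \<in> E" "v \<in> e0" using N by auto
    then show ?thesis using that graph by (auto elim!: simple_graph_edgeE simp: insert_commute)
  qed
  obtain \<alpha> where \<alpha>: "\<alpha> < k" "\<alpha> \<notin> c ` {f \<in> ?E'. u \<in> f}"
    using exists_color_missing_at[OF fin _ _ _ bspec[OF deg e0(2)], of ?E' e0] removed e0(1) by blast
  show ?thesis
  proof (rule that, rule capped_acyclic_edge_coloring_extend[OF c, where c' = "c(e0 := \<alpha>)"])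
    show "?E' \<subseteq> E" by blast
    show "(c(e0 := \<alpha>)) e = c e" if "e \<in> ?E'" for e
      using that removed by auto
    show "(c(e0 := \<alpha>)) e < k" if "e \<in> E - ?E'" for e
    proof -
      have "e = e0" using that removed by blast
      then show ?thesis using \<alpha>(1) by simp
    qed
    show "(c(e0 := \<alpha>)) e \<noteq> (c(e0 := \<alpha>)) f"
      if "e \<in> E - ?E'" "f \<in> E" "e \<noteq> f" "e \<inter> f \<noteq> {}" for e f
    proof -
      have "e = e0" using that(1) removed by blast
      then have "f \<in> ?E'" using that(2,3) removed by blast
      then have "u \<in> f" using that(4) e0(1) \<open>e = e0\<close> by blast
      then have "c f \<noteq> \<alpha>" using \<alpha>(2) \<open>f \<in> ?E'\<close> by blast
      moreover have "f \<noteq> e0" using \<open>e = e0\<close> that(3) by blast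
      ultimately show ?thesis using \<open>e = e0\<close> by simp
    qed
    show "min r k \<le> card ((c(e0 := \<alpha>)) ` cycle_edges vs)"
      if cycle: "is_cycle E vs" and escapes: "\<not> cycle_edges vs \<subseteq> ?E'" for vs
    proof -
      obtain e where e: "e \<in> cycle_edges vs" "e \<notin> ?E'" using escapes by blast
      have "e \<in> E" using subsetD[OF cycle_edges_subset[OF cycle] e(1)] .
      then have "e \<in> E - ?E'" using e(2) by (rule DiffI)
      then have "e = e0" unfolding removed by (rule singletonD)
      then have "e0 \<in> cycle_edges vs" using e(1) by simp
      then have "v \<in> set vs" using cycle_edge_subset_vertices e0(1) by blast
      then have "2 \<le> degree E v" by (rule two_le_degree_of_cycle_vertex[OF fin cycle])
      then show ?thesis using leaf by simp
    qed
  qed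
qed

lemma exists_ear_color_word:
  fixes c :: "'a set \<Rightarrow> nat"
  assumes fin: "finite E" and ear: "strict_ear E xs" and long: "r + 2 \<le> length xs"
    and "3 \<le> r" "3 \<le> k" and deg: "\<forall>w\<in>set xs. degree E w \<le> k"
  obtains cs where "length cs = length xs - 1" "set cs \<subseteq> {..<k}" "successively (\<noteq>) cs"
    "min r k \<le> card (set cs)"
    "hd cs \<notin> c ` {f \<in> {e \<in> E. e \<inter> ear_interior xs = {}}. hd xs \<in> f}"
    "last cs \<notin> c ` {f \<in> {e \<in> E. e \<inter> ear_interior xs = {}}. last xs \<in> f}"
proof -
  let ?E' = "{e \<in> E. e \<inter> ear_interior xs = {}}"
  define L where "L = length xs - 1"
  have L: "r + 1 \<le> L" "length xs = Suc L" using long unfolding L_def by auto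
  have removed: "E - ?E' = ear_edge xs ` {..<L}"
    using strict_ear_removed_edges[OF fin ear] L \<open>3 \<le> r\<close> unfolding L_def by auto
  have "xs \<noteq> []" using L by auto
  then have ends: "hd xs \<in> ear_edge xs 0" "last xs \<in> ear_edge xs (L - 1)"
    "hd xs \<in> set xs" "last xs \<in> set xs" "0 < L"
    using L by (simp_all add: ear_edge_def hd_conv_nth last_conv_nth)
  have sub: "?E' \<subseteq> E" by blast
  have removed_ends: "ear_edge xs 0 \<in> E - ?E'" "ear_edge xs (L - 1) \<in> E - ?E'"
    unfolding removed using ends(5) by simp_all
  have deg_ends: "degree E (hd xs) \<le> k" "degree E (last xs) \<le> k"
    using deg ends(3,4) by blast+
  obtain \<alpha> where \<alpha>: "\<alpha> < k" "\<alpha> \<notin> c ` {f \<in> ?E'. hd xs \<in> f}"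
    by (rule exists_color_missing_at[OF fin sub removed_ends(1) ends(1) deg_ends(1)])
  obtain \<beta> where \<beta>: "\<beta> < k" "\<beta> \<notin> c ` {f \<in> ?E'. last xs \<in> f}"
    by (rule exists_color_missing_at[OF fin sub removed_ends(2) ends(2) deg_ends(2)])
  obtain cs where cs: "length cs = L" "hd cs = \<alpha>" "last cs = \<beta>" "set cs \<subseteq> {..<k}"
    "successively (\<noteq>) cs" "min r k \<le> card (set cs)"
  proof (rule exists_color_word[of "min r k" k L \<alpha> \<beta>])
    show "3 \<le> min r k" "min r k \<le> k" "min r k < L"
      using L(1) \<open>3 \<le> r\<close> \<open>3 \<le> k\<close> by simp_all
  qed (use \<alpha>(1) \<beta>(1) in simp_all)
  then show ?thesis using that \<alpha>(2) \<beta>(2) unfolding L_def by blast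
qed

lemma ear_recoloring_proper:
  fixes E :: "'a set set" and xs :: "'a list" and c c' :: "'a set \<Rightarrow> nat"
  defines "E' \<equiv> {e \<in> E. e \<inter> ear_interior xs = {}}"
  assumes fin: "finite E" and ear: "strict_ear E xs" and "3 \<le> length xs"
    and cs: "length cs = length xs - 1" "successively (\<noteq>) cs"
    "hd cs \<notin> c ` {f \<in> E'. hd xs \<in> f}" "last cs \<notin> c ` {f \<in> E'. last xs \<in> f}"
    and c'_ear: "\<And>j. Suc j < length xs \<Longrightarrow> c' (ear_edge xs j) = cs ! j"
    and c'_old: "\<And>f. f \<in> E' \<Longrightarrow> c' f = c f"
    and i: "Suc i < length xs"
    and f: "f \<in> E" "ear_edge xs i \<noteq> f" "ear_edge xs i \<inter> f \<noteq> {}"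
  shows "c' (ear_edge xs i) \<noteq> c' f"
proof (cases "f \<in> E'")
  case True
  have "cs \<noteq> []" using cs(1) i by auto
  then have "cs ! 0 = hd cs" "cs ! (length cs - 1) = last cs"
    using cs(1) by (simp_all add: hd_conv_nth last_conv_nth)
  have "f \<inter> ear_interior xs = {}" using True unfolding E'_def by simp
  then have "(i = 0 \<and> hd xs \<in> f) \<or> (Suc i = length xs - 1 \<and> last xs \<in> f)"
    using strict_ear_edge_meets_outside[OF i] f(3) by blast
  then show ?thesis
  proof (elim disjE conjE)
    assume "i = 0" "hd xs \<in> f"
    then have "c' (ear_edge xs i) = hd cs" "c' f \<in> c ` {f \<in> E'. hd xs \<in> f}"
      using c'_ear[OF i] c'_old[OF True] True \<open>cs ! 0 = hd cs\<close> by auto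
    then show ?thesis using cs(3) by metis
  next
    assume "Suc i = length xs - 1" "last xs \<in> f"
    then have "i = length cs - 1" using cs(1) by simp
    then have "c' (ear_edge xs i) = last cs" "c' f \<in> c ` {f \<in> E'. last xs \<in> f}"
      using c'_ear[OF i] c'_old[OF True] True \<open>cs ! (length cs - 1) = last cs\<close> \<open>last xs \<in> f\<close>
      by auto
    then show ?thesis using cs(4) by metis
  qed
next
  case False
  then have "f \<in> {e \<in> E. e \<inter> ear_interior xs \<noteq> {}}" using f(1) unfolding E'_def by simp
  then have "f \<in> ear_edge xs ` {..<length xs - 1}"
    unfolding strict_ear_removed_edges[OF fin ear \<open>3 \<le> length xs\<close>] .
  then obtain j where j: "j < length xs - 1" "f = ear_edge xs j" by blast
  have "distinct xs" using ear unfolding strict_ear_def by simp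
  then have "Suc i = j \<or> Suc j = i"
    using ear_edges_meet[of xs i j] i j f(2,3) by auto
  then have "cs ! i \<noteq> cs ! j"
  proof
    assume "Suc i = j"
    then show ?thesis using successively_nth[OF cs(2), of i] j(1) cs(1) by simp
  next
    assume "Suc j = i"
    then show ?thesis using successively_nth[OF cs(2), of j] i cs(1) by fastforce
  qed
  then show ?thesis using c'_ear i j by simp
qed

lemma capped_acyclic_edge_coloring_add_ear:
  assumes fin: "finite E" and ear: "strict_ear E xs" and long: "r + 2 \<le> length xs"
    and "3 \<le> r" "3 \<le> k" and deg: "\<forall>w\<in>set xs. degree E w \<le> k"
    and c: "capped_acyclic_edge_coloring r {e \<in> E. e \<inter> ear_interior xs = {}} k c"
  obtains c' where "capped_acyclic_edge_coloring r E k c'"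
proof -
  let ?E' = "{e \<in> E. e \<inter> ear_interior xs = {}}"
  define L where "L = length xs - 1"
  have L: "r + 1 \<le> L" "length xs = Suc L" using long unfolding L_def by auto
  have removed: "E - ?E' = ear_edge xs ` {..<L}"
    using strict_ear_removed_edges[OF fin ear] L \<open>3 \<le> r\<close> unfolding L_def by auto
  have inj: "inj_on (ear_edge xs) {..<L}"
    using ear_edge_inj_on ear unfolding strict_ear_def L_def by blast
  obtain cs where cs: "length cs = L" "set cs \<subseteq> {..<k}" "successively (\<noteq>) cs"
    "min r k \<le> card (set cs)" "hd cs \<notin> c ` {f \<in> ?E'. hd xs \<in> f}"
    "last cs \<notin> c ` {f \<in> ?E'. last xs \<in> f}"
    using exists_ear_color_word[OF fin ear long assms(4,5) deg] unfolding L_def by blast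
  define c' where "c' e = (if e \<in> ?E' then c e else cs ! the_inv_into {..<L} (ear_edge xs) e)" for e
  have c'_ear: "c' (ear_edge xs j) = cs ! j" if "j < L" for j
    using that removed the_inv_into_f_f[OF inj] unfolding c'_def by auto
  have c'_old: "c' e = c e" if "e \<in> ?E'" for e
    using that unfolding c'_def by simp
  have "3 \<le> length xs" "length cs = length xs - 1" using L cs(1) \<open>3 \<le> r\<close> by simp_all
  note recoloring_proper = ear_recoloring_proper[OF fin ear this cs(3,5,6) _ c'_old]
  show ?thesis
  proof (rule that, rule capped_acyclic_edge_coloring_extend[OF c, where c' = c'])
    show "?E' \<subseteq> E" by blast
    show "c' e = c e" if "e \<in> ?E'" for e
      using that by (rule c'_old)
    show "c' e < k" if "e \<in> E - ?E'" for e
    proof -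
      have "e \<in> ear_edge xs ` {..<L}" using that unfolding removed .
      then obtain j where "j < L" "e = ear_edge xs j" by blast
      then have "c' e \<in> set cs" using c'_ear cs(1) by simp
      then show ?thesis using cs(2) by blast
    qed
    show "c' e \<noteq> c' f" if e: "e \<in> E - ?E'" and f: "f \<in> E" "e \<noteq> f" "e \<inter> f \<noteq> {}" for e f
    proof -
      have "e \<in> ear_edge xs ` {..<L}" using e unfolding removed .
      then obtain i where "i < L" "e = ear_edge xs i" by blast
      moreover have "Suc i < length xs" using \<open>i < L\<close> L(2) by simp
      ultimately show ?thesis
        using recoloring_proper[of i f] c'_ear L(2) f by simp
    qed
    show "min r k \<le> card (c' ` cycle_edges vs)"
      if cycle: "is_cycle E vs" and escapes: "\<not> cycle_edges vs \<subseteq> ?E'" for vs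
    proof -
      have "set cs \<subseteq> c' ` ear_edge xs ` {..<L}"
      proof
        fix y assume "y \<in> set cs"
        then obtain j where "j < L" "y = cs ! j" using cs(1) by (metis in_set_conv_nth)
        then have "y = c' (ear_edge xs j)" using c'_ear by simp
        moreover have "ear_edge xs j \<in> ear_edge xs ` {..<L}" using \<open>j < L\<close> by simp
        ultimately show "y \<in> c' ` ear_edge xs ` {..<L}" by simp
      qed
      moreover have "ear_edge xs ` {..<L} \<subseteq> cycle_edges vs"
        using strict_ear_cycle_leaving_remainder[OF fin ear cycle escapes] unfolding L_def .
      ultimately have "set cs \<subseteq> c' ` cycle_edges vs" by (meson image_mono order_trans)
      then have "card (set cs) \<le> card (c' ` cycle_edges vs)"
        by (rule card_mono[OF finite_imageI[OF finite_cycle_edges]])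
      then show ?thesis using cs(4) by linarith
    qed
  qed
qed

lemma path_degenerate_capped_acyclic_edge_coloring:
  assumes "path_degenerate (r + 1) V E" "simple_graph V E" "3 \<le> r" "3 \<le> k"
    and "\<forall>w\<in>V. degree E w \<le> k"
  shows "\<exists>c. capped_acyclic_edge_coloring r E k c"
  using assms
proof (induction rule: path_degenerate.induct)
  case empty
  then show ?case using capped_acyclic_edge_coloring_empty by blast
next
  case (step V E V' E')
  have fin: "finite E" using step.prems(1) by (rule simple_graph_finite_edges)
  have IH: "\<exists>c. capped_acyclic_edge_coloring r E' k c" if S: "(V', E') = delete_vertices S V E" for S
  proof -
    have del: "V' = V - S" "E' = {e \<in> E. e \<inter> S = {}}" using S unfolding delete_vertices_def by simp_all
    have "degree E' w \<le> k" if "w \<in> V'" for w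
      using degree_mono[OF fin, of E' w] del step.prems(4) that by auto
    then show ?thesis
      using step.IH simple_graph_delete_vertices[OF step.prems(1) S] step.prems(2,3) by blast
  qed
  from step.hyps(1) show ?case
  proof cases
    case (isolated v)
    then have "E' = E" unfolding delete_vertices_def degree_def using fin by auto
    then show ?thesis using IH isolated(3) by blast
  next
    case (leaf v)
    then have "E' = {e \<in> E. e \<inter> {v} = {}}" unfolding delete_vertices_def by simp
    then show ?thesis
      using IH[OF leaf(3)] capped_acyclic_edge_coloring_add_leaf[OF step.prems(1) leaf(2) step.prems(4)]
      by metis
  next
    case (ear xs)
    then have "E' = {e \<in> E. e \<inter> ear_interior xs = {}}" unfolding delete_vertices_def by simp
    moreover have "r + 2 \<le> length xs" using ear(3) by simp
    moreover have "\<forall>w\<in>set xs. degree E w \<le> k" using ear(2) step.prems(4) by blast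
    ultimately show ?thesis
      using IH[OF ear(4)] capped_acyclic_edge_coloring_add_ear[OF fin ear(1) _ step.prems(2,3)]
      by metis
  qed
qed

lemma degree_le_if_proper_edge_coloring:
  assumes "finite E" "proper_edge_coloring E c" "c ` E \<subseteq> {0..<k}"
  shows "degree E v \<le> k"
proof -
  let ?A = "{e \<in> E. v \<in> e}"
  have "inj_on c ?A" using assms(2) unfolding proper_edge_coloring_def inj_on_def by blast
  then have "card ?A = card (c ` ?A)" by (simp add: card_image)
  also have "\<dots> \<le> card {0..<k}" using assms(3) by (intro card_mono) auto
  finally show ?thesis unfolding degree_def by simp
qed

lemma max_degree_le_if_r_acyclic_edge_coloring:
  assumes "simple_graph V E" "r_acyclic_edge_coloring r E k c"
  shows "max_degree V E \<le> k"
proof -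
  have "degree E v \<le> k" for v
    using degree_le_if_proper_edge_coloring[OF simple_graph_finite_edges[OF assms(1)]] assms(2)
    unfolding r_acyclic_edge_coloring_def by blast
  then show ?thesis unfolding max_degree_def using assms(1) unfolding simple_graph_def by simp
qed

lemma r_le_if_r_acyclic_edge_coloring:
  assumes "r_acyclic_edge_coloring r E k c" "is_cycle E vs" "r \<le> length vs"
  shows "r \<le> k"
proof -
  have "r \<le> card (c ` cycle_edges vs)" using assms unfolding r_acyclic_edge_coloring_def by auto
  also have "\<dots> \<le> card {0..<k}"
    using assms(1) cycle_edges_subset[OF assms(2)] unfolding r_acyclic_edge_coloring_def
    by (intro card_mono) auto
  finally show ?thesis by simp
qed

lemma r_acyclic_edge_coloring_if_capped:
  assumes "capped_acyclic_edge_coloring r E k c" "r \<le> k \<or> (\<nexists>vs. is_cycle E vs)"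
  shows "r_acyclic_edge_coloring r E k c"
  using assms unfolding capped_acyclic_edge_coloring_def r_acyclic_edge_coloring_def
  by (metis min.absorb1 min.coboundedI2 order_trans)

lemma path_degenerate_r_acyclic_edge_coloring:
  assumes "path_degenerate (r + 1) V E" "simple_graph V E" "3 \<le> r"
    and "max_degree V E \<le> k" "3 \<le> k" "r \<le> k \<or> (\<nexists>vs. is_cycle E vs)"
  shows "\<exists>c. r_acyclic_edge_coloring r E k c"
proof -
  have "finite V" using assms(2) unfolding simple_graph_def by simp
  have "degree E w \<le> k" if "w \<in> V" for w
    using degree_le_max_degree[OF \<open>finite V\<close> that] assms(4) by (rule le_trans)
  then obtain c where "capped_acyclic_edge_coloring r E k c"
    using path_degenerate_capped_acyclic_edge_coloring[OF assms(1-3,5)] by blast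
  then show ?thesis using r_acyclic_edge_coloring_if_capped[OF _ assms(6)] by blast
qed

lemma gen_acyclic_chromatic_index_eqI:
  assumes "r_acyclic_edge_coloring r E k c"
    and "\<And>k' c'. r_acyclic_edge_coloring r E k' c' \<Longrightarrow> k \<le> k'"
  shows "gen_acyclic_chromatic_index r V E = k"
  unfolding gen_acyclic_chromatic_index_def by (rule Least_equality) (use assms in blast)+

theorem mainTheorem14:
  fixes V :: "'a set" and E :: "'a set set" and r :: nat
  assumes "simple_graph V E"
    and "r \<ge> 3"
    and "path_degenerate (r + 1) V E"
    and "max_degree V E \<ge> 3"
  shows "(forest V E \<longrightarrow> gen_acyclic_chromatic_index r V E = max_degree V E) \<and>
         (\<not> forest V E \<longrightarrow> gen_acyclic_chromatic_index r V E = max (max_degree V E) r)"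
proof (intro conjI impI)
  let ?\<Delta> = "max_degree V E"
  have lower: "?\<Delta> \<le> k" if "r_acyclic_edge_coloring r E k c" for k c
    using max_degree_le_if_r_acyclic_edge_coloring[OF assms(1) that] .
  show "gen_acyclic_chromatic_index r V E = ?\<Delta>" if forest: "forest V E"
  proof -
    obtain c where "r_acyclic_edge_coloring r E ?\<Delta> c"
      using path_degenerate_r_acyclic_edge_coloring[OF assms(3,1,2) order_refl assms(4)] forest
      unfolding forest_def by blast
    then show ?thesis using lower by (rule gen_acyclic_chromatic_index_eqI)
  qed
  show "gen_acyclic_chromatic_index r V E = max ?\<Delta> r" if non_forest: "\<not> forest V E"
  proof -
    obtain vs where cycle: "is_cycle E vs" using non_forest unfolding forest_def by blast
    then have "r \<le> length vs" using path_degenerate_cycle_length[OF assms(3,1)] by fastforce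
    obtain c where "r_acyclic_edge_coloring r E (max ?\<Delta> r) c"
      using path_degenerate_r_acyclic_edge_coloring[OF assms(3,1,2), of "max ?\<Delta> r"] assms(4)
      by (auto simp: le_max_iff_disj)
    then show ?thesis
      by (rule gen_acyclic_chromatic_index_eqI)
        (use lower r_le_if_r_acyclic_edge_coloring[OF _ cycle \<open>r \<le> length vs\<close>] in simp)
  qed
qed

end
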